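(* Let $R$ be a generalized Rickart $*$-ring and let $B$ be a $*$-subring of $R$ such that $B=B''$. Then (1) if $x\in B$, then $GRP(x)\in B$ (where $GRP(x)$ is a generalized right projection of $x$ in $R$); and (2) $B$ is a generalized Rickart $*$-ring.
   Context: A $*$-ring is an associative ring $R$ with an involution $x\mapsto x^*$ (additive, $(xy)^*=y^*x^*$, $x^{**}=x$); a $*$-subring is a subring closed under $*$. A projection is an element $e$ with $e=e^*=e^2$. For a nonempty $S\subseteq R$, the commutant is $S'=\{x\in R: xs=sx \text{ for all } s\in S\}$ and $S''=(S')'$. For $a$ in a ring $T$, $r(a)=\{b\in T: ab=0\}$. A $*$-ring $T$ is a generalized Rickart $*$-ring if for every $x\in T$ there exist a positive integer $n$ and a projection $g\in T$ with $r(x^n)=gT$. A projection $e\in R$ is a generalized right projection of $x\in R$, written $GRP(x)=e$, if there exists $n\in\mathbb N$ with $x^ne=x^n$ and, for all $y\in R$, $x^ny=0$ implies $ey=0$. *)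

theory Defs
  imports Main
begin

text \<open>Rings are associative, not necessarily unital (type class ring).
  The involution is an explicit function star on the ambient ring R (the type).\<close>

definition involution :: "('a::ring \<Rightarrow> 'a) \<Rightarrow> bool" where
  "involution star \<longleftrightarrow>
     (\<forall>x y. star (x + y) = star x + star y) \<and>
     (\<forall>x y. star (x * y) = star y * star x) \<and>
     (\<forall>x. star (star x) = x)"

definition is_subring :: "'a::ring set \<Rightarrow> bool" where
  "is_subring B \<longleftrightarrow> 0 \<in> B \<and> (\<forall>x\<in>B. \<forall>y\<in>B. x + y \<in> B \<and> x - y \<in> B \<and> x * y \<in> B)"

definition star_subring :: "('a::ring \<Rightarrow> 'a) \<Rightarrow> 'a set \<Rightarrow> bool" where
  "star_subring star B \<longleftrightarrow> is_subring B \<and> (\<forall>x\<in>B. star x \<in> B)"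

text \<open>Positive powers in a possibly non-unital ring: ppow x n = x^n for n \<ge> 1
  (the value at n = 0 is never used).\<close>
fun ppow :: "'a::ring \<Rightarrow> nat \<Rightarrow> 'a" where
  "ppow x 0 = 0"
| "ppow x (Suc 0) = x"
| "ppow x (Suc (Suc n)) = x * ppow x (Suc n)"

definition projection :: "('a::ring \<Rightarrow> 'a) \<Rightarrow> 'a \<Rightarrow> bool" where
  "projection star e \<longleftrightarrow> e = star e \<and> e * e = e"

definition commutant :: "'a::ring set \<Rightarrow> 'a set" where
  "commutant S = {x. \<forall>s\<in>S. x * s = s * x}"

definition rann :: "'a::ring set \<Rightarrow> 'a \<Rightarrow> 'a set" where
  "rann T a = {b \<in> T. a * b = 0}"

definition gen_rickart :: "('a::ring \<Rightarrow> 'a) \<Rightarrow> 'a set \<Rightarrow> bool" where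
  "gen_rickart star T \<longleftrightarrow>
     (\<forall>x\<in>T. \<exists>n>0. \<exists>g\<in>T. projection star g \<and> rann T (ppow x n) = (\<lambda>t. g * t) ` T)"

definition is_GRP :: "('a::ring \<Rightarrow> 'a) \<Rightarrow> 'a \<Rightarrow> 'a \<Rightarrow> bool" where
  "is_GRP star x e \<longleftrightarrow> projection star e \<and>
     (\<exists>n>0. ppow x n * e = ppow x n \<and> (\<forall>y. ppow x n * y = 0 \<longrightarrow> e * y = 0))"

end

theory Submission
  imports Defs
begin

text \<open>Every u in the commutant B' commutes with the powers of any x \<in> B, so it leaves the
  right annihilator r(x^n) invariant. For a generalized right projection e of x this
  annihilator is {y. e y = 0}, for the projection g of the Rickart condition it is gR.
  Invariance under u and under u* (B' is *-closed) forces the projection to commute with u,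
  hence e, g \<in> B'' = B. Since R has no unit, identities are verified by multiplying with
  arbitrary t \<in> R on the right; this suffices because R is right nondegenerate:
  if vR = 0 then v* \<in> r(v^n) = gR, so v = v g = 0.\<close>

lemma involution_star_mult:
  "involution star \<Longrightarrow> star (x * y) = star y * star x"
  unfolding involution_def by blast

lemma involution_star_star:
  "involution star \<Longrightarrow> star (star x) = x"
  unfolding involution_def by blast

lemma ppow_mem_subring:
  assumes "is_subring B" "x \<in> B"
  shows "ppow x n \<in> B"
  using assms by (induction x n rule: ppow.induct) (auto simp: is_subring_def)

lemma ppow_mult_eq_0:
  fixes v :: "'a::ring"
  assumes "\<forall>t. v * t = 0" "n > 0"
  shows "ppow v n * t = 0"
  using assms by (induction v n arbitrary: t rule: ppow.induct) (simp_all add: mult.assoc)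

lemma gen_rickart_right_nondegenerate:
  fixes star :: "'a::ring \<Rightarrow> 'a" and v :: 'a
  assumes inv: "involution star" and gr: "gen_rickart star (UNIV :: 'a set)"
    and v: "\<forall>t. v * t = 0"
  shows "v = 0"
proof -
  obtain n g where n: "n > 0" and g: "projection star g"
    and r: "rann UNIV (ppow v n) = (\<lambda>t. g * t) ` UNIV"
    using gr unfolding gen_rickart_def by blast
  have "star v \<in> rann UNIV (ppow v n)"
    unfolding rann_def using ppow_mult_eq_0[OF v n] by simp
  then obtain s where "star v = g * s" using r by auto
  then have "v = star s * g"
    using g inv unfolding projection_def
    by (metis involution_star_mult involution_star_star)
  then have "v = v * g"
    using g unfolding projection_def by (metis mult.assoc)
  with v show ?thesis by simp
qed

lemma gen_rickart_eqI:
  fixes star :: "'a::ring \<Rightarrow> 'a" and a b :: 'a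
  assumes "involution star" "gen_rickart star (UNIV :: 'a set)"
    and "\<And>t. a * t = b * t"
  shows "a = b"
  using gen_rickart_right_nondegenerate[OF assms(1,2), of "a - b"] assms(3)
  by (simp add: left_diff_distrib)

lemma commutant_star_closed:
  assumes inv: "involution star" and S: "\<forall>s\<in>S. star s \<in> S"
    and u: "u \<in> commutant S"
  shows "star u \<in> commutant S"
  unfolding commutant_def
proof (intro CollectI ballI)
  fix s assume "s \<in> S"
  with S u have "u * star s = star s * u" unfolding commutant_def by blast
  then have "star (u * star s) = star (star s * u)" by simp
  then show "star u * s = s * star u"
    using inv by (simp add: involution_star_mult involution_star_star)
qed

lemma commutant_ppow:
  assumes "is_subring B" "x \<in> B" "u \<in> commutant B"
  shows "u * ppow x n = ppow x n * u"
  using ppow_mem_subring[OF assms(1,2)] assms(3) unfolding commutant_def by blast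

text \<open>Taking adjoints in e u* e = u* e gives e u e = e u.\<close>

lemma projection_mem_commutant:
  assumes inv: "involution star" and e: "projection star e"
    and S: "\<forall>s\<in>S. star s \<in> S" and inv_range: "\<forall>u\<in>S. e * u * e = u * e"
  shows "e \<in> commutant S"
  unfolding commutant_def
proof (intro CollectI ballI)
  fix u assume u: "u \<in> S"
  then have "e * star u * e = star u * e" using S inv_range by blast
  then have "star (e * star u * e) = star (star u * e)" by simp
  then have "e * u * e = e * u"
    using e inv unfolding projection_def
    by (metis involution_star_mult involution_star_star mult.assoc)
  with u inv_range show "e * u = u * e" by metis
qed

lemma GRP_kernel_invariant:
  fixes star :: "'a::ring \<Rightarrow> 'a" and u p e :: 'a
  assumes inv: "involution star" and gr: "gen_rickart star (UNIV :: 'a set)"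
    and c: "u * p = p * u" and pe: "p * e = p"
    and ker: "\<forall>y. p * y = 0 \<longrightarrow> e * y = 0"
  shows "e * u * e = e * u"
proof (rule gen_rickart_eqI[OF inv gr])
  fix t
  have "p * (t - e * t) = 0" using pe by (simp add: right_diff_distrib mult.assoc[symmetric])
  then have "p * (u * (t - e * t)) = 0" using c by (metis mult.assoc mult_zero_right)
  then have "e * (u * (t - e * t)) = 0" using ker by blast
  then show "e * u * e * t = e * u * t" by (simp add: algebra_simps)
qed

lemma rickart_range_invariant:
  fixes star :: "'a::ring \<Rightarrow> 'a" and u p g :: 'a
  assumes inv: "involution star" and gr: "gen_rickart star (UNIV :: 'a set)"
    and c: "u * p = p * u" and gg: "g * g = g"
    and r: "rann UNIV p = (\<lambda>t. g * t) ` UNIV"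
  shows "g * u * g = u * g"
proof (rule gen_rickart_eqI[OF inv gr])
  fix t
  have "p * (g * t) = 0" using r unfolding rann_def by blast
  then have "p * (u * g * t) = 0" using c by (metis mult.assoc mult_zero_right)
  then obtain s where "u * g * t = g * s" using r unfolding rann_def by blast
  then show "g * u * g * t = u * g * t" using gg by (metis mult.assoc)
qed

lemma GRP_mem_bicommutant:
  fixes star :: "'a::ring \<Rightarrow> 'a"
  assumes inv: "involution star" and gr: "gen_rickart star (UNIV :: 'a set)"
    and B: "star_subring star B" and x: "x \<in> B" and e: "is_GRP star x e"
  shows "e \<in> commutant (commutant B)"
proof -
  obtain n where pe: "ppow x n * e = ppow x n"
    and ker: "\<forall>y. ppow x n * y = 0 \<longrightarrow> e * y = 0"
    using e unfolding is_GRP_def by blast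
  have e_proj: "projection star e" using e unfolding is_GRP_def by blast
  have sub: "is_subring B" and B_star: "\<forall>s\<in>B. star s \<in> B"
    using B unfolding star_subring_def by auto
  have S: "\<forall>u\<in>commutant B. star u \<in> commutant B"
    using commutant_star_closed[OF inv B_star] by blast
  have "e * u * e = u * e" if u: "u \<in> commutant B" for u
  proof -
    have "e * star u * e = e * star u"
      using GRP_kernel_invariant[OF inv gr commutant_ppow[OF sub x] pe ker] S u by blast
    then have "star (e * star u * e) = star (e * star u)" by simp
    then show ?thesis
      using e_proj inv unfolding projection_def
      by (metis involution_star_mult involution_star_star mult.assoc)
  qed
  then show ?thesis using projection_mem_commutant[OF inv e_proj S] by blast
qed

lemma rickart_projection_mem_bicommutant:
  fixes star :: "'a::ring \<Rightarrow> 'a"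
  assumes inv: "involution star" and gr: "gen_rickart star (UNIV :: 'a set)"
    and B: "star_subring star B" and x: "x \<in> B" and g: "projection star g"
    and r: "rann UNIV (ppow x n) = (\<lambda>t. g * t) ` UNIV"
  shows "g \<in> commutant (commutant B)"
proof -
  have sub: "is_subring B" and B_star: "\<forall>s\<in>B. star s \<in> B"
    using B unfolding star_subring_def by auto
  have "g * g = g" using g unfolding projection_def by blast
  then have "\<forall>u\<in>commutant B. g * u * g = u * g"
    using rickart_range_invariant[OF inv gr commutant_ppow[OF sub x] _ r] by blast
  then show ?thesis
    using projection_mem_commutant[OF inv g] commutant_star_closed[OF inv B_star] by blast
qed

lemma rann_subring:
  assumes sub: "is_subring B" and g: "g \<in> B" "g * g = g"
    and r: "rann UNIV a = (\<lambda>t. g * t) ` UNIV"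
  shows "rann B a = (\<lambda>t. g * t) ` B"
proof
  show "rann B a \<subseteq> (\<lambda>t. g * t) ` B"
  proof
    fix b assume b: "b \<in> rann B a"
    then obtain s where "b = g * s" using r unfolding rann_def by blast
    then have "b = g * b" using g by (metis mult.assoc)
    with b show "b \<in> (\<lambda>t. g * t) ` B" unfolding rann_def by blast
  qed
  show "(\<lambda>t. g * t) ` B \<subseteq> rann B a"
    using r sub g unfolding rann_def is_subring_def by blast
qed

theorem mainTheorem5:
  fixes star :: "'a::ring \<Rightarrow> 'a" and B :: "'a set"
  assumes "involution star"
    and "gen_rickart star (UNIV :: 'a set)"
    and "star_subring star B"
    and "B = commutant (commutant B)"
  shows "(\<forall>x\<in>B. \<forall>e. is_GRP star x e \<longrightarrow> e \<in> B) \<and> gen_rickart star B"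
proof
  show "\<forall>x\<in>B. \<forall>e. is_GRP star x e \<longrightarrow> e \<in> B"
    using GRP_mem_bicommutant[OF assms(1-3)] assms(4) by blast
  show "gen_rickart star B"
    unfolding gen_rickart_def
  proof
    fix x assume x: "x \<in> B"
    then obtain n g where n: "n > 0" and g: "projection star g"
      and r: "rann UNIV (ppow x n) = (\<lambda>t. g * t) ` UNIV"
      using assms(2) unfolding gen_rickart_def by blast
    have "g \<in> B"
      using rickart_projection_mem_bicommutant[OF assms(1-3) x g r] assms(4) by blast
    moreover have "rann B (ppow x n) = (\<lambda>t. g * t) ` B"
      using rann_subring[OF _ \<open>g \<in> B\<close> _ r] assms(3) g
      unfolding star_subring_def projection_def by blast
    ultimately show "\<exists>n>0. \<exists>g\<in>B. projection star g \<and> rann B (ppow x n) = (\<lambda>t. g * t) ` B"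
      using n g by blast
  qed
qed

end
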